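(* Let $\Pi$ be a $2$-dimensional toral sub-manifold confined to a plane, parametrised as $\Pi=\{u\xi+v\eta:(u,v)\in[0,A]\times[0,B]\}$. Then $$\iint_{\Pi^2}\left(r^2+\frac{D\Omega D^T}{m}+\frac{\mathrm{tr}(H\Omega H\Omega)}{m^2}\right)dp\,dp'\ll_\Pi\frac1N+\frac{\mathcal{G}}{N^2},$$ where $$\mathcal{G}=\sum_{\substack{\lambda,\lambda'\in\Lambda_m\\ \lambda\neq\lambda'}}\left|\int_0^A\int_0^B e^{2\pi i\langle\lambda-\lambda',u\xi+v\eta\rangle}du\,dv\right|^2.$$
   Context: For a positive integer $m$ let $\Lambda=\Lambda_m=\{\lambda\in\mathbb{Z}^3:\|\lambda\|^2=m\}$ and $N=|\Lambda_m|$; $m$ ranges over integers with $m\not\equiv 0,4,7\pmod 8$ and bounds refer to $m\to\infty$. Let $\vec n=(n_1,n_2,n_3)$ be the unit normal to the plane containing $\Pi\subset\mathbb{T}^3=\mathbb{R}^3/\mathbb{Z}^3$, $\{\vec n,\xi,\eta\}$ an orthonormal basis of $\mathbb{R}^3$, and $\Pi$ parametrised by $\gamma:[0,A]\times[0,B]\to\Pi$, $(u,v)\mapsto u\xi+v\eta$, where $A=\max\{u:u\xi+v\eta\in\Pi\}$, $B=\max\{v:u\xi+v\eta\in\Pi\}$. For $p=u\xi+v\eta$, $p'=u'\xi+v'\eta$: $r(p,p')=\frac1N\sum_{\lambda\in\Lambda}e^{2\pi i\langle\lambda,(u'-u)\xi+(v'-v)\eta\rangle}$; $D(p,p')=\frac{2\pi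 i}{N}\sum_{\lambda}e^{2\pi i\langle\lambda,(u'-u)\xi+(v'-v)\eta\rangle}\lambda$ (row vector); $H(p,p')=-\frac{4\pi^2}{N}\sum_{\lambda}e^{2\pi i\langle\lambda,(u'-u)\xi+(v'-v)\eta\rangle}\lambda^T\lambda$; $\Omega=\begin{pmatrix}n_2^2+n_3^2&-n_1n_2&-n_1n_3\\-n_1n_2&n_1^2+n_3^2&-n_2n_3\\-n_1n_3&-n_2n_3&n_1^2+n_2^2\end{pmatrix}$. Integration over $\Pi^2$ is with respect to surface area measure. *)

theory Defs
  imports "HOL-Analysis.Analysis"
begin

definition Lam :: "nat \<Rightarrow> (real^3) set" where
  "Lam m = {l. (\<forall>i. l $ i \<in> \<int>) \<and> l \<bullet> l = real m}"

definition NN :: "nat \<Rightarrow> nat" where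
  "NN m = card (Lam m)"

definition ee :: "real^3 \<Rightarrow> real^3 \<Rightarrow> complex" where
  "ee l w = exp (2 * of_real pi * \<i> * of_real (l \<bullet> w))"

definition diffv :: "real^3 \<Rightarrow> real^3 \<Rightarrow> real \<times> real \<Rightarrow> real \<times> real \<Rightarrow> real^3" where
  "diffv xi eta p p' = (fst p' - fst p) *\<^sub>R xi + (snd p' - snd p) *\<^sub>R eta"

definition rr :: "nat \<Rightarrow> real^3 \<Rightarrow> complex" where
  "rr m w = (1 / of_nat (NN m)) * (\<Sum>l\<in>Lam m. ee l w)"

definition DD :: "nat \<Rightarrow> real^3 \<Rightarrow> complex^3" where
  "DD m w = (\<chi> j. (2 * of_real pi * \<i> / of_nat (NN m)) * (\<Sum>l\<in>Lam m. ee l w * of_real (l $ j)))"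

definition HH :: "nat \<Rightarrow> real^3 \<Rightarrow> complex^3^3" where
  "HH m w = (\<chi> i j. (- 4 * (of_real pi)\<^sup>2 / of_nat (NN m)) *
      (\<Sum>l\<in>Lam m. ee l w * of_real (l $ i) * of_real (l $ j)))"

definition Omega :: "real^3 \<Rightarrow> real^3^3" where
  "Omega n = vector [
     vector [(n$2)\<^sup>2 + (n$3)\<^sup>2, - (n$1 * n$2), - (n$1 * n$3)],
     vector [- (n$1 * n$2), (n$1)\<^sup>2 + (n$3)\<^sup>2, - (n$2 * n$3)],
     vector [- (n$1 * n$3), - (n$2 * n$3), (n$1)\<^sup>2 + (n$2)\<^sup>2]]"

definition OmegaC :: "real^3 \<Rightarrow> complex^3^3" where
  "OmegaC n = (\<chi> i j. of_real (Omega n $ i $ j))"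

definition quad :: "complex^3 \<Rightarrow> complex^3^3 \<Rightarrow> complex" where
  "quad d M = (\<Sum>i\<in>UNIV. \<Sum>j\<in>UNIV. d $ i * M $ i $ j * d $ j)"

definition integrand :: "nat \<Rightarrow> real^3 \<Rightarrow> real^3 \<Rightarrow> real^3 \<Rightarrow>
    (real \<times> real) \<times> (real \<times> real) \<Rightarrow> complex" where
  "integrand m n xi eta pp = (let w = diffv xi eta (fst pp) (snd pp) in
     (rr m w)\<^sup>2 + quad (DD m w) (OmegaC n) / of_nat m
     + trace (HH m w ** OmegaC n ** HH m w ** OmegaC n) / (of_nat m)\<^sup>2)"

definition GG :: "nat \<Rightarrow> real^3 \<Rightarrow> real^3 \<Rightarrow> real \<Rightarrow> real \<Rightarrow> real" where
  "GG m xi eta A B = (\<Sum>(l, l')\<in>{(l, l'). l \<in> Lam m \<and> l' \<in> Lam m \<and> l \<noteq> l'}.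
     (cmod (integral ({0..A} \<times> {0..B})
        (\<lambda>(u, v). ee (l - l') (u *\<^sub>R xi + v *\<^sub>R eta))))\<^sup>2)"

end

theory Submission
  imports Defs
begin

(* Each of r^2, D Omega D^T and tr(H Omega H Omega) is a
   double sum over Lambda^2 of e(lambda + lambda', p' - p), with weights 1, -4 pi^2 lambda Omega lambda'^T
   and 16 pi^4 (lambda Omega lambda'^T)(lambda' Omega lambda^T), all divided by N^2. The entries of
   Omega = I - n^T n are at most 1 and the coordinates of lambda at most sqrt m, so after the
   normalisations by m and m^2 every weight is bounded by an absolute constant. Integrating
   e(mu, p' - p) over Pi^2 gives |int_Pi e(mu, p) dp|^2, and the substitution lambda' -> -lambda'
   turns the sum of these over lambda + lambda' into the sum over lambda - lambda', whose diagonal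
   is N area(Pi)^2 and whose off-diagonal part is G. *)

lemma ee_add: "ee l w * ee l' w = ee (l + l') w"
  by (simp add: ee_def inner_add_left distrib_left distrib_right flip: exp_add)

lemma ee_diffv:
  "ee mu (diffv xi eta p p')
    = cnj (ee mu (fst p *\<^sub>R xi + snd p *\<^sub>R eta)) * ee mu (fst p' *\<^sub>R xi + snd p' *\<^sub>R eta)"
  by (simp add: ee_def diffv_def exp_cnj inner_add_right algebra_simps flip: exp_add)

lemma inner_matrix_vector_mult:
  fixes x y :: "real^'n::finite"
  shows "x \<bullet> (M *v y) = (\<Sum>i\<in>UNIV. \<Sum>j\<in>UNIV. x $ i * M $ i $ j * y $ j)"
  by (simp add: inner_vec_def matrix_vector_mult_def sum_distrib_left mult.assoc)

lemma sum_product_nested: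
  "(\<Sum>a\<in>A. \<Sum>b\<in>B. f a b) * (\<Sum>c\<in>C. \<Sum>d\<in>D. g c d)
    = (\<Sum>a\<in>A. \<Sum>b\<in>B. \<Sum>c\<in>C. \<Sum>d\<in>D. f a b * (g c d :: 'a::comm_semiring_0))"
  by (simp only: sum_distrib_right) (simp only: sum_distrib_left)

lemma quad_sum_expand:
  fixes x :: "'a \<Rightarrow> 3 \<Rightarrow> complex"
  shows "quad (\<chi> i. \<Sum>l\<in>S. x l i) M
    = (\<Sum>l\<in>S. \<Sum>l'\<in>S. \<Sum>i\<in>UNIV. \<Sum>j\<in>UNIV. x l i * M $ i $ j * x l' j)"
proof -
  have swap: "(\<Sum>i\<in>(UNIV :: 3 set). \<Sum>l\<in>S. f i l) = (\<Sum>l\<in>S. \<Sum>i\<in>UNIV. f i l)"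
    for f :: "3 \<Rightarrow> 'a \<Rightarrow> complex"
    by (rule sum.swap)
  show ?thesis
    unfolding quad_def by (simp add: sum_distrib_left sum_distrib_right swap) (rule sum.swap)
qed

lemma trace_mult4:
  fixes X M Y N :: "'a::comm_semiring_1^'n::finite^'n"
  shows "trace (X ** M ** Y ** N)
    = (\<Sum>q\<in>UNIV. \<Sum>i\<in>UNIV. \<Sum>j\<in>UNIV. \<Sum>k\<in>UNIV. X $ i $ j * M $ j $ k * Y $ k $ q * N $ q $ i)"
proof -
  have "trace (X ** M ** Y ** N)
      = (\<Sum>i\<in>UNIV. \<Sum>q\<in>UNIV. \<Sum>k\<in>UNIV. \<Sum>j\<in>UNIV. X $ i $ j * M $ j $ k * Y $ k $ q * N $ q $ i)"
    by (simp add: trace_def matrix_matrix_mult_def sum_distrib_left sum_distrib_right mult.assoc)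
  also have "\<dots>
      = (\<Sum>q\<in>UNIV. \<Sum>i\<in>UNIV. \<Sum>k\<in>UNIV. \<Sum>j\<in>UNIV. X $ i $ j * M $ j $ k * Y $ k $ q * N $ q $ i)"
    by (rule sum.swap)
  also have "\<dots>
      = (\<Sum>q\<in>UNIV. \<Sum>i\<in>UNIV. \<Sum>j\<in>UNIV. \<Sum>k\<in>UNIV. X $ i $ j * M $ j $ k * Y $ k $ q * N $ q $ i)"
    by (intro sum.cong refl sum.swap)
  finally show ?thesis .
qed

lemma trace_sum_expand:
  fixes X :: "'a \<Rightarrow> 'n::finite \<Rightarrow> 'n \<Rightarrow> 'b::comm_semiring_1"
  shows "trace ((\<chi> i j. \<Sum>l\<in>S. X l i j) ** M ** (\<chi> i j. \<Sum>l\<in>S. X l i j) ** M)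
    = (\<Sum>l\<in>S. \<Sum>l'\<in>S. \<Sum>q\<in>UNIV. \<Sum>i\<in>UNIV. \<Sum>j\<in>UNIV. \<Sum>k\<in>UNIV.
        X l i j * M $ j $ k * X l' k q * M $ q $ i)"
proof -
  have swap: "(\<Sum>i\<in>(UNIV :: 'n set). \<Sum>l\<in>S. f i l) = (\<Sum>l\<in>S. \<Sum>i\<in>UNIV. f i l)"
    for f :: "'n \<Rightarrow> 'a \<Rightarrow> 'b"
    by (rule sum.swap)
  show ?thesis
    unfolding trace_mult4 by (simp add: sum_distrib_left sum_distrib_right swap) (rule sum.swap)
qed

lemma rr_power2: "(rr m w)\<^sup>2 = (\<Sum>l\<in>Lam m. \<Sum>l'\<in>Lam m. ee (l + l') w) / (of_nat (NN m))\<^sup>2"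
  by (simp add: rr_def power2_eq_square sum_product ee_add sum_divide_distrib)

lemma quad_DD_eq:
  "quad (DD m w) (OmegaC n) = (\<Sum>l\<in>Lam m. \<Sum>l'\<in>Lam m.
     of_real (- 4 * pi\<^sup>2 * (l \<bullet> (Omega n *v l'))) * ee (l + l') w) / (of_nat (NN m))\<^sup>2"
proof -
  define c where "c = 2 * of_real pi * \<i> / (of_nat (NN m) :: complex)"
  have "DD m w = (\<chi> j. \<Sum>l\<in>Lam m. c * ee l w * of_real (l $ j))"
    by (simp add: DD_def c_def sum_distrib_left mult.assoc)
  then have "quad (DD m w) (OmegaC n) = (\<Sum>l\<in>Lam m. \<Sum>l'\<in>Lam m. \<Sum>i\<in>UNIV. \<Sum>j\<in>UNIV.
      c * ee l w * of_real (l $ i) * OmegaC n $ i $ j * (c * ee l' w * of_real (l' $ j)))"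
    by (simp add: quad_sum_expand)
  also have "\<dots> = (\<Sum>l\<in>Lam m. \<Sum>l'\<in>Lam m. c\<^sup>2 * of_real (l \<bullet> (Omega n *v l')) * ee (l + l') w)"
    by (intro sum.cong refl)
      (simp add: inner_matrix_vector_mult OmegaC_def sum_distrib_left power2_eq_square mult_ac
        flip: ee_add)
  finally show ?thesis
    by (simp add: c_def sum_divide_distrib power_divide power_mult_distrib mult_ac)
qed

lemma trace_HH_eq:
  "trace (HH m w ** OmegaC n ** HH m w ** OmegaC n) = (\<Sum>l\<in>Lam m. \<Sum>l'\<in>Lam m.
     of_real (16 * pi ^ 4 * (l \<bullet> (Omega n *v l')) * (l' \<bullet> (Omega n *v l))) * ee (l + l') w)
     / (of_nat (NN m))\<^sup>2"
proof -
  define c where "c = - 4 * (of_real pi)\<^sup>2 / (of_nat (NN m) :: complex)"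
  have "HH m w = (\<chi> i j. \<Sum>l\<in>Lam m. c * ee l w * of_real (l $ i) * of_real (l $ j))"
    by (simp add: HH_def c_def sum_distrib_left mult.assoc)
  then have "trace (HH m w ** OmegaC n ** HH m w ** OmegaC n) = (\<Sum>l\<in>Lam m. \<Sum>l'\<in>Lam m.
      \<Sum>q\<in>UNIV. \<Sum>i\<in>UNIV. \<Sum>j\<in>UNIV. \<Sum>k\<in>UNIV.
      c * ee l w * of_real (l $ i) * of_real (l $ j) * OmegaC n $ j $ k
      * (c * ee l' w * of_real (l' $ k) * of_real (l' $ q)) * OmegaC n $ q $ i)"
    by (simp add: trace_sum_expand)
  also have "\<dots> = (\<Sum>l\<in>Lam m. \<Sum>l'\<in>Lam m.
      c\<^sup>2 * of_real ((l' \<bullet> (Omega n *v l)) * (l \<bullet> (Omega n *v l'))) * ee (l + l') w)"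
    unfolding inner_matrix_vector_mult of_real_mult of_real_sum sum_product_nested
    by (intro sum.cong refl)
      (simp add: OmegaC_def sum_distrib_left power2_eq_square mult_ac flip: ee_add)
  finally show ?thesis
    by (simp add: c_def sum_divide_distrib power_divide power_mult_distrib mult_ac)
qed

(* -4 pi^2 = (2 pi i)^2 and 16 pi^4 = (-4 pi^2)^2 come from the normalising constants of D and H. *)
definition pair_weight :: "nat \<Rightarrow> real^3 \<Rightarrow> real^3 \<Rightarrow> real^3 \<Rightarrow> real" where
  "pair_weight m n l l' = 1 - 4 * pi\<^sup>2 * (l \<bullet> (Omega n *v l')) / m
     + 16 * pi ^ 4 * (l \<bullet> (Omega n *v l')) * (l' \<bullet> (Omega n *v l)) / (real m)\<^sup>2"

lemma integrand_eq:
  "integrand m n xi eta pp = (\<Sum>l\<in>Lam m. \<Sum>l'\<in>Lam m.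
     of_real (pair_weight m n l l') * ee (l + l') (diffv xi eta (fst pp) (snd pp)))
     / (of_nat (NN m))\<^sup>2"
  unfolding integrand_def Let_def rr_power2 quad_DD_eq trace_HH_eq pair_weight_def
  by (simp add: sum_divide_distrib distrib_right mult_ac flip: sum.distrib)
    (intro sum.cong refl, simp add: algebra_simps divide_inverse)

lemma abs_Lam_component_le: "l \<in> Lam m \<Longrightarrow> \<bar>l $ i\<bar> \<le> sqrt (real m)"
  using component_le_norm_cart [of l i] by (simp add: Lam_def norm_eq_sqrt_inner)

lemma finite_Lam: "finite (Lam m)"
proof -
  let ?K = "{k \<in> \<int>. \<bar>k\<bar> \<le> sqrt (real m)}"
  have "Lam m \<subseteq> (\<lambda>f. \<chi> i. f i) ` ((UNIV :: 3 set) \<rightarrow>\<^sub>E ?K)"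
  proof
    fix l assume "l \<in> Lam m"
    then have "(\<lambda>i. l $ i) \<in> UNIV \<rightarrow>\<^sub>E ?K"
      using abs_Lam_component_le by (auto simp: Lam_def)
    then show "l \<in> (\<lambda>f. \<chi> i. f i) ` (UNIV \<rightarrow>\<^sub>E ?K)"
      by (intro image_eqI [of _ _ "\<lambda>i. l $ i"]) auto
  qed
  moreover have "finite ((UNIV :: 3 set) \<rightarrow>\<^sub>E ?K)"
    by (rule finite_PiE) (use finite_abs_int_segment in auto)
  ultimately show ?thesis
    by (rule finite_subset [OF _ finite_imageI])
qed

lemma uminus_Lam: "uminus ` Lam m = Lam m"
proof -
  have neg: "- l \<in> Lam m" if "l \<in> Lam m" for l
    using that by (simp add: Lam_def)
  show ?thesis
  proof
    show "uminus ` Lam m \<subseteq> Lam m"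
      using neg by blast
    show "Lam m \<subseteq> uminus ` Lam m"
      using neg by (metis image_eqI minus_minus subsetI)
  qed
qed

lemma rectangle_eq_cbox: "{a..b} \<times> {c..d} = cbox (a, c) (b :: real, d :: real)"
  by (simp add: cbox_Pair_eq)

definition plane_integral :: "real^3 \<Rightarrow> real^3 \<Rightarrow> real \<Rightarrow> real \<Rightarrow> real^3 \<Rightarrow> complex" where
  "plane_integral xi eta A B mu
     = integral ({0..A} \<times> {0..B}) (\<lambda>(u, v). ee mu (u *\<^sub>R xi + v *\<^sub>R eta))"

lemma norm_plane_integral_0:
  assumes "A \<ge> 0" and "B \<ge> 0"
  shows "cmod (plane_integral xi eta A B 0) = A * B"
  using assms by (simp add: plane_integral_def ee_def rectangle_eq_cbox content_Pair split_def)

lemma integral_ee_diffv: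
  "integral (({0..A} \<times> {0..B}) \<times> ({0..A} \<times> {0..B})) (\<lambda>pp. ee mu (diffv xi eta (fst pp) (snd pp)))
    = of_real ((cmod (plane_integral xi eta A B mu))\<^sup>2)"
proof -
  define g where "g = (\<lambda>p :: real \<times> real. ee mu (fst p *\<^sub>R xi + snd p *\<^sub>R eta))"
  define I where "I = plane_integral xi eta A B mu"
  have I: "integral (cbox (0, 0) (A, B)) g = I"
    by (simp add: I_def plane_integral_def g_def rectangle_eq_cbox split_def)
  have factor: "(\<lambda>pp. ee mu (diffv xi eta (fst pp) (snd pp))) = (\<lambda>pp. cnj (g (fst pp)) * g (snd pp))"
    by (simp add: ee_diffv g_def)
  have "continuous_on X (\<lambda>pp. cnj (g (fst pp)) * g (snd pp))" for X
    unfolding g_def ee_def by (intro continuous_intros)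
  then have "integral (cbox ((0, 0), (0, 0)) ((A, B), (A, B))) (\<lambda>pp. cnj (g (fst pp)) * g (snd pp))
      = integral (cbox (0, 0) (A, B)) (\<lambda>p. integral (cbox (0, 0) (A, B)) (\<lambda>p'. cnj (g p) * g p'))"
    by (simp add: integral_prod_continuous)
  also have "\<dots> = cnj I * I"
    by (simp add: I flip: integral_cnj)
  also have "\<dots> = of_real ((cmod I)\<^sup>2)"
    using complex_norm_square [of I] by (simp only: mult.commute)
  finally show ?thesis
    unfolding factor rectangle_eq_cbox I_def by (simp only: cbox_Pair_eq)
qed

lemma integrable_ee_diffv:
  "(\<lambda>pp. c * ee mu (diffv xi eta (fst pp) (snd pp)))
    integrable_on (({0..A} \<times> {0..B}) \<times> ({0..A} \<times> {0..B}))"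
proof -
  have "continuous_on X (\<lambda>pp. c * ee mu (diffv xi eta (fst pp) (snd pp)))" for X
    unfolding ee_def diffv_def by (intro continuous_intros)
  then show ?thesis
    unfolding rectangle_eq_cbox cbox_Pair_eq [symmetric] by (rule integrable_continuous)
qed

lemma integral_integrand_eq:
  "integral (({0..A} \<times> {0..B}) \<times> ({0..A} \<times> {0..B})) (integrand m n xi eta)
    = of_real ((\<Sum>l\<in>Lam m. \<Sum>l'\<in>Lam m.
        pair_weight m n l l' * (cmod (plane_integral xi eta A B (l + l')))\<^sup>2) / (real (NN m))\<^sup>2)"
  by (simp add: integrand_eq [abs_def] integral_sum finite_Lam integrable_sum integrable_ee_diffv
      integral_ee_diffv)

lemma Omega_eq:
  assumes "norm n = 1"
  shows "Omega n $ i $ j = (if i = j then 1 else 0) - n $ i * n $ j"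
proof -
  have "(n $ 1)\<^sup>2 + (n $ 2)\<^sup>2 + (n $ 3)\<^sup>2 = 1"
    using assms by (simp add: norm_eq_sqrt_inner inner_vec_def sum_3 power2_eq_square)
  then show ?thesis
    using exhaust_3 [of i] exhaust_3 [of j] by (auto simp: Omega_def power2_eq_square)
qed

lemma abs_Omega_le_1:
  assumes "norm n = 1"
  shows "\<bar>Omega n $ i $ j\<bar> \<le> 1"
proof -
  have n_i: "\<bar>n $ i\<bar> \<le> 1" and n_j: "\<bar>n $ j\<bar> \<le> 1"
    using component_le_norm_cart assms by metis+
  show ?thesis
  proof (cases "i = j")
    case True
    then have "Omega n $ i $ j = 1 - (n $ i)\<^sup>2"
      by (simp add: Omega_eq [OF assms] power2_eq_square)
    moreover have "(n $ i)\<^sup>2 \<le> 1" and "0 \<le> (n $ i)\<^sup>2"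
      using n_i by (simp_all add: abs_square_le_1)
    ultimately show ?thesis
      by arith
  next
    case False
    then show ?thesis
      using n_i n_j by (simp add: Omega_eq [OF assms] abs_mult mult_le_one)
  qed
qed

lemma abs_inner_matrix_vector_le:
  fixes x y :: "real^'n::finite"
  assumes "\<And>i j. \<bar>M $ i $ j\<bar> \<le> c" and "\<And>i. \<bar>x $ i\<bar> \<le> r" and "\<And>i. \<bar>y $ i\<bar> \<le> r"
  shows "\<bar>x \<bullet> (M *v y)\<bar> \<le> real CARD('n) ^ 2 * (c * r\<^sup>2)"
proof -
  have "0 \<le> c" and "0 \<le> r"
    using assms(1,2) abs_ge_zero order_trans by metis+
  then have "\<bar>x $ i * M $ i $ j * y $ j\<bar> \<le> r * c * r" for i j
    unfolding abs_mult using assms by (intro mult_mono) auto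
  then have "\<bar>x \<bullet> (M *v y)\<bar> \<le> (\<Sum>i\<in>(UNIV :: 'n set). \<Sum>j\<in>(UNIV :: 'n set). r * c * r)"
    unfolding inner_matrix_vector_mult
    by (intro order_trans [OF sum_abs] sum_mono order_trans [OF sum_abs]) simp
  then show ?thesis
    by (simp add: power2_eq_square mult_ac)
qed

lemma abs_pair_weight_le:
  assumes "norm n = 1" and "m > 0" and "l \<in> Lam m" and "l' \<in> Lam m"
  shows "\<bar>pair_weight m n l l'\<bar> \<le> 1 + 36 * pi\<^sup>2 + 1296 * pi ^ 4"
proof -
  define q q' where "q = l \<bullet> (Omega n *v l')" and "q' = l' \<bullet> (Omega n *v l)"
  have form_le: "\<bar>a \<bullet> (Omega n *v b)\<bar> \<le> 9 * real m" if "a \<in> Lam m" and "b \<in> Lam m" for a b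
    using abs_inner_matrix_vector_le [of "Omega n" 1 a "sqrt (real m)" b]
    by (simp add: abs_Omega_le_1 abs_Lam_component_le assms that)
  then have q_le: "\<bar>q\<bar> \<le> 9 * real m" and "\<bar>q'\<bar> \<le> 9 * real m"
    unfolding q_def q'_def using assms by simp_all
  then have qq'_le: "\<bar>q\<bar> * \<bar>q'\<bar> \<le> (9 * real m) * (9 * real m)"
    by (intro mult_mono) simp_all
  have triangle: "\<bar>1 - a + b\<bar> \<le> 1 + \<bar>a\<bar> + \<bar>b\<bar>" for a b :: real
    by arith
  have "\<bar>pair_weight m n l l'\<bar>
      \<le> 1 + \<bar>4 * pi\<^sup>2 * q / m\<bar> + \<bar>16 * pi ^ 4 * q * q' / (real m)\<^sup>2\<bar>"
    unfolding pair_weight_def q_def [symmetric] q'_def [symmetric] by (rule triangle)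
  also have "\<dots> = 1 + 4 * pi\<^sup>2 * \<bar>q\<bar> / m + 16 * pi ^ 4 * (\<bar>q\<bar> * \<bar>q'\<bar>) / (real m)\<^sup>2"
    by (simp add: abs_mult)
  also have "\<dots> \<le> 1 + 4 * pi\<^sup>2 * (9 * real m) / m
      + 16 * pi ^ 4 * ((9 * real m) * (9 * real m)) / (real m)\<^sup>2"
    using q_le qq'_le by (intro add_mono order_refl divide_right_mono mult_left_mono) simp_all
  also have "\<dots> = 1 + 36 * pi\<^sup>2 + 1296 * pi ^ 4"
    using assms by (simp add: field_simps power2_eq_square)
  finally show ?thesis .
qed

lemma sum_sum_add_eq_sum_sum_diff:
  fixes f :: "'a::ab_group_add \<Rightarrow> 'b::comm_monoid_add"
  assumes "uminus ` S = S"
  shows "(\<Sum>l\<in>S. \<Sum>l'\<in>S. f (l + l')) = (\<Sum>l\<in>S. \<Sum>l'\<in>S. f (l - l'))"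
proof (rule sum.cong [OF refl])
  fix l
  have "(\<Sum>l'\<in>S. f (l - l')) = (\<Sum>l'\<in>uminus ` S. f (l + l'))"
    by (subst sum.reindex) (auto simp: inj_on_def)
  then show "(\<Sum>l'\<in>S. f (l + l')) = (\<Sum>l'\<in>S. f (l - l'))"
    by (simp add: assms)
qed

lemma sum_sum_diff_eq_diagonal_plus_offdiagonal:
  fixes f :: "'a::ab_group_add \<Rightarrow> 'b::semiring_1"
  assumes "finite S"
  shows "(\<Sum>l\<in>S. \<Sum>l'\<in>S. f (l - l'))
    = of_nat (card S) * f 0 + (\<Sum>(l, l')\<in>{(l, l'). l \<in> S \<and> l' \<in> S \<and> l \<noteq> l'}. f (l - l'))"
proof -
  let ?D = "(\<lambda>l. (l, l)) ` S" and ?O = "{(l, l'). l \<in> S \<and> l' \<in> S \<and> l \<noteq> l'}"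
  have "S \<times> S = ?D \<union> ?O" and "finite ?O"
    using assms by (auto intro: finite_subset [of _ "S \<times> S"])
  then have "(\<Sum>(l, l')\<in>S \<times> S. f (l - l'))
      = (\<Sum>(l, l')\<in>?D. f (l - l')) + (\<Sum>(l, l')\<in>?O. f (l - l'))"
    using assms by (simp only:) (rule sum.union_disjoint, auto)
  also have "(\<Sum>(l, l')\<in>?D. f (l - l')) = of_nat (card S) * f 0"
    by (simp add: sum.reindex inj_on_def)
  finally show ?thesis
    by (simp add: sum.cartesian_product)
qed

lemma norm_integral_integrand_le:
  assumes "norm n = 1" and "m > 0" and "A \<ge> 0" and "B \<ge> 0"
  shows "cmod (integral (({0..A} \<times> {0..B}) \<times> ({0..A} \<times> {0..B})) (integrand m n xi eta))
    \<le> (1 + 36 * pi\<^sup>2 + 1296 * pi ^ 4)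
        * ((A * B)\<^sup>2 / real (NN m) + GG m xi eta A B / (real (NN m))\<^sup>2)"
proof -
  define K where "K = 1 + 36 * pi\<^sup>2 + 1296 * pi ^ 4"
  define P where "P mu = (cmod (plane_integral xi eta A B mu))\<^sup>2" for mu
  have "cmod (integral (({0..A} \<times> {0..B}) \<times> ({0..A} \<times> {0..B})) (integrand m n xi eta))
      = \<bar>\<Sum>l\<in>Lam m. \<Sum>l'\<in>Lam m. pair_weight m n l l' * P (l + l')\<bar> / (real (NN m))\<^sup>2"
    unfolding integral_integrand_eq norm_of_real by (simp add: P_def)
  also have "\<dots> \<le> (\<Sum>l\<in>Lam m. \<Sum>l'\<in>Lam m. K * P (l + l')) / (real (NN m))\<^sup>2"
  proof (intro divide_right_mono order_trans [OF sum_abs] sum_mono order_trans [OF sum_abs])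
    fix l l' assume "l \<in> Lam m" and "l' \<in> Lam m"
    then have "\<bar>pair_weight m n l l'\<bar> \<le> K"
      unfolding K_def using assms by (intro abs_pair_weight_le)
    then show "\<bar>pair_weight m n l l' * P (l + l')\<bar> \<le> K * P (l + l')"
      by (simp add: abs_mult P_def mult_right_mono)
  qed simp
  also have "\<dots> = K * (\<Sum>l\<in>Lam m. \<Sum>l'\<in>Lam m. P (l - l')) / (real (NN m))\<^sup>2"
    using sum_sum_add_eq_sum_sum_diff [OF uminus_Lam, of "\<lambda>mu. K * P mu"]
    by (simp add: sum_distrib_left)
  also have "\<dots> = K * (real (NN m) * (A * B)\<^sup>2 + GG m xi eta A B) / (real (NN m))\<^sup>2"
  proof -
    have "P 0 = (A * B)\<^sup>2"
      by (simp add: P_def norm_plane_integral_0 assms)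
    moreover have "GG m xi eta A B
        = (\<Sum>(l, l')\<in>{(l, l'). l \<in> Lam m \<and> l' \<in> Lam m \<and> l \<noteq> l'}. P (l - l'))"
      by (simp add: GG_def P_def plane_integral_def)
    ultimately show ?thesis
      unfolding sum_sum_diff_eq_diagonal_plus_offdiagonal [OF finite_Lam, of P] NN_def by simp
  qed
  also have "\<dots> = K * ((A * B)\<^sup>2 / real (NN m) + GG m xi eta A B / (real (NN m))\<^sup>2)"
    by (cases "NN m = 0") (simp_all add: field_simps power2_eq_square)
  finally show ?thesis
    unfolding K_def .
qed

theorem lemma4p1:
  fixes n xi eta :: "real^3" and A B :: real
  assumes "norm n = 1" and "norm xi = 1" and "norm eta = 1"
    and "n \<bullet> xi = 0" and "n \<bullet> eta = 0" and "xi \<bullet> eta = 0"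
    and "A > 0" and "B > 0"
  shows "\<exists>C M. \<forall>m::nat. m \<ge> M \<and> m mod 8 \<notin> {0, 4, 7} \<longrightarrow>
    cmod (integral (({0..A} \<times> {0..B}) \<times> ({0..A} \<times> {0..B})) (integrand m n xi eta))
      \<le> C * (1 / real (NN m) + GG m xi eta A B / (real (NN m))\<^sup>2)"
proof (intro exI allI impI)
  fix m :: nat
  assume "1 \<le> m \<and> m mod 8 \<notin> {0, 4, 7}"
  define K where "K = 1 + 36 * pi\<^sup>2 + 1296 * pi ^ 4"
  define a N G where "a = (A * B)\<^sup>2" and "N = real (NN m)" and "G = GG m xi eta A B"
  have "0 \<le> G"
    unfolding G_def GG_def by (auto intro: sum_nonneg)
  have "cmod (integral (({0..A} \<times> {0..B}) \<times> ({0..A} \<times> {0..B})) (integrand m n xi eta))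
      \<le> K * (a / N + G / N\<^sup>2)"
    unfolding K_def a_def N_def G_def
    using \<open>1 \<le> m \<and> _\<close> assms by (intro norm_integral_integrand_le) auto
  also have "\<dots> \<le> K * ((1 + a) / N + (1 + a) * G / N\<^sup>2)"
    using \<open>0 \<le> G\<close> by (intro mult_left_mono add_mono divide_right_mono)
      (simp_all add: K_def a_def N_def algebra_simps)
  finally show "cmod (integral (({0..A} \<times> {0..B}) \<times> ({0..A} \<times> {0..B})) (integrand m n xi eta))
      \<le> K * (1 + (A * B)\<^sup>2) * (1 / real (NN m) + GG m xi eta A B / (real (NN m))\<^sup>2)"
    by (simp add: a_def N_def G_def algebra_simps add_divide_distrib)
qed

end
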